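(* Let $(S,V)$ be a complete semiring-semimodule pair, let $S'\subseteq S$ contain $0$ and $1$, let $n\ge1$, let $\Gamma$ be an alphabet, and let $M\in (S'^{n\times n})^{\Gamma^*\times\Gamma^*}$ be a pushdown transition matrix. Then for all $0\le l\le n$, the family $(z_p)_{p\in\Gamma}$ with $z_p=(M^{\omega,l})_p\in V^n$ is a solution of the linear system $$z_p=\sum_{p'\in\Gamma}(A_M)_{p,p'}\,z_{p'},\qquad p\in\Gamma.$$
   Context: A complete semiring-semimodule pair $(S,V)$ (in the sense of Ésik and Kuich, "Modern Automata Theory") consists of a complete starsemiring $S$ (arbitrary sums with infinite associativity/commutativity/distributivity laws, star $s^*=\sum_{j\ge0}s^j$) and a complete $S$-semimodule $V$, with infinite products $\prod_{j\ge1}s_j\in V$ of sequences in $S$ satisfying the axioms of that framework. $M\in (S'^{n\times n})^{\Gamma^*\times\Gamma^*}$ is a $\Gamma^*\times\Gamma^*$ matrix with $n\times n$ blocks over $S'$; it is a pushdown transition matrix if (i) for each $p\in\Gamma$ only finitely many blocks $M_{p,\pi}$ are nonzero, and (ii) $M_{\pi_1,\pi_2}=M_{p,\pi}$ if $\pi_1=p\pi'$, $\pi_2=\pi\pi'$ for some $p\in\Gamma$, $\pi,\pi'\in\Gamma^*$, and $0$ otherwise. $M^*=\sum_{m\ge0}M^m$ with blocks $(M^* )_{\pi,\pi'}$. Let $P_l=\{(j_1,j_2,\dots)\in\{1,\dots,n\}^\omega\mid j_t\le l\text{ for infinitely many }t\}$; $M^{\omega,l}\in (V^n)^{\Gamma^*}$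 is given by $((M^{\omega,l})_\pi)_i=\sum_{\pi_1,\pi_2,\ldots\in\Gamma^*}\sum_{(j_1,j_2,\ldots)\in P_l}(M_{\pi,\pi_1})_{i,j_1}(M_{\pi_1,\pi_2})_{j_1,j_2}\cdots$ (sum of weights of infinite paths from $(\pi,i)$ in the graph on $\Gamma^*\times\{1,\dots,n\}$ with adjacency matrix $M$ that visit states $\le l$ infinitely often). For $p,p'\in\Gamma$, $$(A_M)_{p,p'}=\sum_{\substack{\pi=p_1\dots p_k\in\Gamma^+,\ 1\le j\le k\\ p_j=p'}}M_{p,\pi}\,(M^* )_{p_1,\epsilon}\cdots(M^* )_{p_{j-1},\epsilon}\in S^{n\times n}.$$ *)

theory Defs
  imports Main
begin

text \<open>Complete sums are required for all
families indexed by subsets of U (continuum many indices, closed under countable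
products); families indexed by other types are transported into U along an
injection (the result does not depend on the injection, by the partition axiom).\<close>

type_synonym U = "nat \<Rightarrow> nat"

definition gsum :: "((U \<Rightarrow> 'a) \<Rightarrow> U set \<Rightarrow> 'a) \<Rightarrow> ('j \<Rightarrow> 'a) \<Rightarrow> 'j set \<Rightarrow> 'a" where
  "gsum Sm f I = (let e = (SOME e :: 'j \<Rightarrow> U. inj_on e I)
                  in Sm (\<lambda>u. f (inv_into I e u)) (e ` I))"

definition complete_sum :: "((U \<Rightarrow> 'a::comm_monoid_add) \<Rightarrow> U set \<Rightarrow> 'a) \<Rightarrow> bool" where
  "complete_sum Sm \<longleftrightarrow>
     (\<forall>f g I. (\<forall>i\<in>I. f i = g i) \<longrightarrow> Sm f I = Sm g I) \<and>
     (\<forall>f. Sm f {} = 0) \<and>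
     (\<forall>f i. Sm f {i} = f i) \<and>
     (\<forall>f i j. i \<noteq> j \<longrightarrow> Sm f {i, j} = f i + f j) \<and>
     (\<forall>f I J (K :: U \<Rightarrow> U set).
        (\<Union>j\<in>J. K j) = I \<and> (\<forall>j\<in>J. \<forall>j'\<in>J. j \<noteq> j' \<longrightarrow> K j \<inter> K j' = {})
        \<longrightarrow> Sm (\<lambda>j. Sm f (K j)) J = Sm f I)"

text \<open>Sequences s_1, s_2, ... are represented as s 0, s 1, ...\<close>
definition complete_ss_pair ::
  "((U \<Rightarrow> 's::{semiring_0,monoid_mult}) \<Rightarrow> U set \<Rightarrow> 's) \<Rightarrow> ('s \<Rightarrow> 'v::comm_monoid_add \<Rightarrow> 'v)
   \<Rightarrow> ((U \<Rightarrow> 'v) \<Rightarrow> U set \<Rightarrow> 'v) \<Rightarrow> ((nat \<Rightarrow> 's) \<Rightarrow> 'v) \<Rightarrow> bool" where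
  "complete_ss_pair ssum act vsum iprod \<longleftrightarrow>
     \<comment> \<open>complete semiring\<close>
     complete_sum ssum \<and>
     (\<forall>c f I. ssum (\<lambda>i. c * f i) I = c * ssum f I) \<and>
     (\<forall>c f I. ssum (\<lambda>i. f i * c) I = ssum f I * c) \<and>
     \<comment> \<open>semimodule\<close>
     (\<forall>s1 s2 v. act (s1 + s2) v = act s1 v + act s2 v) \<and>
     (\<forall>s v1 v2. act s (v1 + v2) = act s v1 + act s v2) \<and>
     (\<forall>s1 s2 v. act (s1 * s2) v = act s1 (act s2 v)) \<and>
     (\<forall>v. act 1 v = v) \<and>
     (\<forall>v. act 0 v = 0) \<and>
     (\<forall>s. act s 0 = 0) \<and>
     \<comment> \<open>complete semimodule\<close>
     complete_sum vsum \<and>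
     (\<forall>f I v. act (ssum f I) v = vsum (\<lambda>i. act (f i) v) I) \<and>
     (\<forall>s g I. act s (vsum g I) = vsum (\<lambda>i. act s (g i)) I) \<and>
     \<comment> \<open>infinite product axioms\<close>
     (\<forall>s. iprod s = act (s 0) (iprod (\<lambda>j. s (Suc j)))) \<and>
     (\<forall>s (m :: nat \<Rightarrow> nat). m 0 = 0 \<and> strict_mono m \<longrightarrow>
        iprod s = iprod (\<lambda>j. prod_list (map s [m j..<m (Suc j)]))) \<and>
     (\<forall>(I :: nat \<Rightarrow> U set) (s :: nat \<Rightarrow> U \<Rightarrow> 's).
        iprod (\<lambda>j. ssum (s j) (I j)) =
        gsum vsum (\<lambda>f. iprod (\<lambda>j. s j (f j))) {f. \<forall>j. f j \<in> I j})"

text \<open>n x n matrices over S: functions nat => nat => S, indices in {1..n}.\<close>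
definition mat_mult :: "nat \<Rightarrow> (nat \<Rightarrow> nat \<Rightarrow> 's::semiring_0) \<Rightarrow> (nat \<Rightarrow> nat \<Rightarrow> 's) \<Rightarrow> nat \<Rightarrow> nat \<Rightarrow> 's" where
  "mat_mult n A B i j = (\<Sum>k=1..n. A i k * B k j)"

definition mat_one :: "nat \<Rightarrow> nat \<Rightarrow> 's::{zero,one}" where
  "mat_one i j = (if i = j then 1 else 0)"

definition mat_list_prod :: "nat \<Rightarrow> (nat \<Rightarrow> nat \<Rightarrow> 's::{semiring_0,monoid_mult}) list \<Rightarrow> nat \<Rightarrow> nat \<Rightarrow> 's" where
  "mat_list_prod n As = foldr (mat_mult n) As mat_one"

text \<open>Gamma* x Gamma* matrices with n x n blocks: M pi1 pi2 i j = (M_{pi1,pi2})_{i,j}.\<close>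
definition bmat_mult :: "((U \<Rightarrow> 's::semiring_0) \<Rightarrow> U set \<Rightarrow> 's) \<Rightarrow> nat
    \<Rightarrow> ('g list \<Rightarrow> 'g list \<Rightarrow> nat \<Rightarrow> nat \<Rightarrow> 's) \<Rightarrow> ('g list \<Rightarrow> 'g list \<Rightarrow> nat \<Rightarrow> nat \<Rightarrow> 's)
    \<Rightarrow> 'g list \<Rightarrow> 'g list \<Rightarrow> nat \<Rightarrow> nat \<Rightarrow> 's" where
  "bmat_mult ssum n A B p1 p2 i j = gsum ssum (\<lambda>p. \<Sum>k=1..n. A p1 p i k * B p p2 k j) UNIV"

primrec bmat_pow :: "((U \<Rightarrow> 's::{semiring_0,monoid_mult}) \<Rightarrow> U set \<Rightarrow> 's) \<Rightarrow> nat
    \<Rightarrow> ('g list \<Rightarrow> 'g list \<Rightarrow> nat \<Rightarrow> nat \<Rightarrow> 's) \<Rightarrow> nat \<Rightarrow> 'g list \<Rightarrow> 'g list \<Rightarrow> nat \<Rightarrow> nat \<Rightarrow> 's" where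
  "bmat_pow ssum n M 0 = (\<lambda>p1 p2 i j. if p1 = p2 \<and> i = j then 1 else 0)"
| "bmat_pow ssum n M (Suc m) = bmat_mult ssum n (bmat_pow ssum n M m) M"

definition bmat_star :: "((U \<Rightarrow> 's::{semiring_0,monoid_mult}) \<Rightarrow> U set \<Rightarrow> 's) \<Rightarrow> nat
    \<Rightarrow> ('g list \<Rightarrow> 'g list \<Rightarrow> nat \<Rightarrow> nat \<Rightarrow> 's) \<Rightarrow> 'g list \<Rightarrow> 'g list \<Rightarrow> nat \<Rightarrow> nat \<Rightarrow> 's" where
  "bmat_star ssum n M p1 p2 i j = gsum ssum (\<lambda>m. bmat_pow ssum n M m p1 p2 i j) UNIV"

definition pushdown_matrix :: "nat \<Rightarrow> ('g list \<Rightarrow> 'g list \<Rightarrow> nat \<Rightarrow> nat \<Rightarrow> 's::zero) \<Rightarrow> bool" where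
  "pushdown_matrix n M \<longleftrightarrow>
     (\<forall>p. finite {pi. \<exists>i\<in>{1..n}. \<exists>j\<in>{1..n}. M [p] pi i j \<noteq> 0}) \<and>
     (\<forall>p pi pi'. \<forall>i\<in>{1..n}. \<forall>j\<in>{1..n}. M (p # pi') (pi @ pi') i j = M [p] pi i j) \<and>
     (\<forall>p1 p2. (\<nexists>p pi pi'. p1 = p # pi' \<and> p2 = pi @ pi') \<longrightarrow>
        (\<forall>i\<in>{1..n}. \<forall>j\<in>{1..n}. M p1 p2 i j = 0))"

text \<open>A_M: (A_M)_{p,p'} = sum over pi = p_1...p_k and positions with p_j = p' (here the
position is 0-based: j < length pi, pi!j = p') of M_{p,pi} (M^*)_{p_1,eps} ... (M^*)_{p_{j-1},eps}.\<close>
definition amat :: "((U \<Rightarrow> 's::{semiring_0,monoid_mult}) \<Rightarrow> U set \<Rightarrow> 's) \<Rightarrow> nat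
    \<Rightarrow> ('g list \<Rightarrow> 'g list \<Rightarrow> nat \<Rightarrow> nat \<Rightarrow> 's) \<Rightarrow> 'g \<Rightarrow> 'g \<Rightarrow> nat \<Rightarrow> nat \<Rightarrow> 's" where
  "amat ssum n M p p' i i' =
     gsum ssum (\<lambda>(pi, j). mat_mult n (M [p] pi)
                    (mat_list_prod n (map (\<lambda>q. bmat_star ssum n M [q] []) (take j pi))) i i')
       {(pi, j). j < length pi \<and> pi ! j = p'}"

text \<open>M^{omega,l}: sum over infinite paths (pi,i) -> sigma 0 -> sigma 1 -> ... in Gamma* x {1..n}
whose state components are <= l infinitely often, of the infinite product of edge weights.\<close>
definition path_weight :: "('g list \<Rightarrow> 'g list \<Rightarrow> nat \<Rightarrow> nat \<Rightarrow> 's)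
    \<Rightarrow> 'g list \<Rightarrow> nat \<Rightarrow> (nat \<Rightarrow> 'g list \<times> nat) \<Rightarrow> nat \<Rightarrow> 's" where
  "path_weight M pi i sigma t =
     (let a = (if t = 0 then (pi, i) else sigma (t - 1)); b = sigma t
      in M (fst a) (fst b) (snd a) (snd b))"

definition momega :: "((U \<Rightarrow> 'v) \<Rightarrow> U set \<Rightarrow> 'v) \<Rightarrow> ((nat \<Rightarrow> 's) \<Rightarrow> 'v) \<Rightarrow> nat
    \<Rightarrow> ('g list \<Rightarrow> 'g list \<Rightarrow> nat \<Rightarrow> nat \<Rightarrow> 's) \<Rightarrow> nat \<Rightarrow> 'g list \<Rightarrow> nat \<Rightarrow> 'v" where
  "momega vsum iprod n M l pi i =
     gsum vsum (\<lambda>sigma. iprod (path_weight M pi i sigma))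
       {sigma. (\<forall>t. snd (sigma t) \<in> {1..n}) \<and> infinite {t. snd (sigma t) \<le> l}}"

end

(*
  Write z_pi for the total weight of the infinite paths starting in stack pi. A path from the
  stack q w either never visits w, and is then a path from q lifted by the suffix w, or it
  reaches w for the first time after a finite path which, with w stripped, goes from q to the
  empty stack; the weights of these finite paths sum to the star of M at (q, eps). Hence
  z_(q w) = z_q + star(M)_(q,eps) z_w, and by induction z_pi is the sum over the positions j of
  pi of star(M)_(p_1,eps) ... star(M)_(p_(j-1),eps) z_(p_j). Decomposing a path from p by its
  first step p -> pi yields the linear system. All rearrangements of sums over sets of paths
  come from the partition axiom of complete sums, applied to explicit bijections between them.
*)

theory Submission
  imports Defs "HOL-Library.Countable" "HOL-Library.Omega_Words_Fun"
begin

section \<open>Complete sums over index types embedded in U\<close>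

text \<open>gsum transports a family to U along some injection; for index types without one it
  returns junk, so the summation lemmas are stated for index types in this class.\<close>

class U_embeddable =
  assumes ex_inj_U: "\<exists>e :: 'a \<Rightarrow> U. inj e"

subclass (in countable) U_embeddable
proof
  obtain f :: "'a \<Rightarrow> nat" where "inj f" using ex_inj by blast
  then show "\<exists>e :: 'a \<Rightarrow> U. inj e"
    by (intro exI[of _ "\<lambda>a _. f a"]) (auto simp: inj_def fun_eq_iff)
qed

instance "fun" :: (countable, countable) U_embeddable
proof
  show "\<exists>e :: ('a \<Rightarrow> 'b) \<Rightarrow> U. inj e"
    by (rule exI[of _ "\<lambda>f k. to_nat (f (from_nat k))"])
      (auto simp: inj_def fun_eq_iff, metis from_nat_to_nat)
qed

instance prod :: (U_embeddable, U_embeddable) U_embeddable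
proof
  obtain e1 :: "'a \<Rightarrow> U" where e1: "inj e1" using ex_inj_U by blast
  obtain e2 :: "'b \<Rightarrow> U" where e2: "inj e2" using ex_inj_U by blast
  have "inj (\<lambda>(a, b) k. if even k then e1 a (k div 2) else e2 b (k div 2))"
  proof (rule injI, clarsimp)
    fix a b a' b'
    assume h: "(\<lambda>k. if even k then e1 a (k div 2) else e2 b (k div 2)) =
               (\<lambda>k. if even k then e1 a' (k div 2) else e2 b' (k div 2))"
    have "e1 a = e1 a'" "e2 b = e2 b'"
      using fun_cong[OF h, of "2 * k" for k] fun_cong[OF h, of "2 * k + 1" for k] by auto
    then show "a = a' \<and> b = b'" using e1 e2 by (auto dest: injD)
  qed
  then show "\<exists>e :: 'a \<times> 'b \<Rightarrow> U. inj e" by blast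
qed

context
  fixes Sm :: "(U \<Rightarrow> 'a::comm_monoid_add) \<Rightarrow> U set \<Rightarrow> 'a"
  assumes Sm: "complete_sum Sm"
begin

lemmas Sm_axioms = Sm[unfolded complete_sum_def]

lemma Sm_cong: "(\<And>i. i \<in> I \<Longrightarrow> f i = g i) \<Longrightarrow> Sm f I = Sm g I"
  using Sm_axioms[THEN conjunct1] by blast

lemma Sm_empty: "Sm f {} = 0"
  using Sm_axioms[THEN conjunct2, THEN conjunct1] by blast

lemma Sm_singleton: "Sm f {i} = f i"
  using Sm_axioms[THEN conjunct2, THEN conjunct2, THEN conjunct1] by blast

lemma Sm_two: "i \<noteq> j \<Longrightarrow> Sm f {i, j} = f i + f j"
  using Sm_axioms[THEN conjunct2, THEN conjunct2, THEN conjunct2, THEN conjunct1] by blast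

lemma Sm_partition:
  "(\<Union>j\<in>J. K j) = I \<Longrightarrow> (\<And>j j'. j \<in> J \<Longrightarrow> j' \<in> J \<Longrightarrow> j \<noteq> j' \<Longrightarrow> K j \<inter> K j' = {})
   \<Longrightarrow> Sm (\<lambda>j. Sm f (K j)) J = Sm f I"
  using Sm_axioms[THEN conjunct2, THEN conjunct2, THEN conjunct2, THEN conjunct2] by blast

lemma gsum_via_inj:
  fixes e :: "'j \<Rightarrow> U"
  assumes e: "inj_on e I"
  shows "gsum Sm f I = Sm (\<lambda>u. f (inv_into I e u)) (e ` I)"
proof -
  define e0 where "e0 = (SOME e :: 'j \<Rightarrow> U. inj_on e I)"
  have e0: "inj_on e0 I" unfolding e0_def by (rule someI[of "\<lambda>e. inj_on e I"]) (rule e)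
  define g0 where "g0 = (\<lambda>u. f (inv_into I e0 u))"
  have "gsum Sm f I = Sm g0 (e0 ` I)" unfolding gsum_def e0_def g0_def Let_def by simp
  also have "\<dots> = Sm (\<lambda>u. Sm g0 {e0 (inv_into I e u)}) (e ` I)"
  proof (rule Sm_partition[symmetric])
    show "(\<Union>j\<in>e ` I. {e0 (inv_into I e j)}) = e0 ` I"
      using e by (auto simp: inv_into_f_f image_iff)
    fix j j' assume "j \<in> e ` I" "j' \<in> e ` I" "j \<noteq> j'"
    then show "{e0 (inv_into I e j)} \<inter> {e0 (inv_into I e j')} = {}"
      using e e0 by (auto simp: inv_into_f_f inj_on_eq_iff)
  qed
  also have "\<dots> = Sm (\<lambda>u. f (inv_into I e u)) (e ` I)"
    by (rule Sm_cong) (use e e0 in \<open>auto simp: Sm_singleton g0_def inv_into_f_f\<close>)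
  finally show ?thesis .
qed

lemma gsum_cong: "(\<And>i. i \<in> I \<Longrightarrow> f i = g i) \<Longrightarrow> gsum Sm f I = gsum Sm g I"
  unfolding gsum_def Let_def by (rule Sm_cong) (metis imageE inv_into_into)

lemma gsum_empty: "gsum Sm f {} = 0"
  by (subst gsum_via_inj[of "\<lambda>_. undefined"]) (auto simp: Sm_empty)

lemma gsum_singleton: "gsum Sm f {a} = f a"
  by (subst gsum_via_inj[of "\<lambda>_. undefined"]) (auto simp: Sm_singleton inv_into_def)

lemma gsum_neutral:
  assumes "\<And>i. i \<in> I \<Longrightarrow> f i = 0"
  shows "gsum Sm f I = 0"
proof -
  have "Sm (\<lambda>j. Sm (\<lambda>_. 0) {}) J = Sm (\<lambda>_. 0) {}" for J
    by (rule Sm_partition) auto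
  then have "Sm (\<lambda>_. 0) J = 0" for J by (simp add: Sm_empty)
  moreover have "gsum Sm f I = gsum Sm (\<lambda>_. 0) I" by (rule gsum_cong) (rule assms)
  ultimately show ?thesis unfolding gsum_def Let_def by simp
qed

lemma gsum_partition:
  fixes K :: "'j::U_embeddable \<Rightarrow> 'i::U_embeddable set"
  assumes U: "(\<Union>j\<in>J. K j) = I"
    and D: "\<And>j j'. j \<in> J \<Longrightarrow> j' \<in> J \<Longrightarrow> j \<noteq> j' \<Longrightarrow> K j \<inter> K j' = {}"
  shows "gsum Sm (\<lambda>j. gsum Sm f (K j)) J = gsum Sm f I"
proof -
  obtain e :: "'i \<Rightarrow> U" where e: "inj e" using ex_inj_U by blast
  obtain d :: "'j \<Rightarrow> U" where "inj d" using ex_inj_U by blast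
  then have d: "inj_on d J" by (rule inj_on_subset) simp
  have eI: "inj_on e I" using e by (rule inj_on_subset) simp
  define g where "g = (\<lambda>u. f (inv_into I e u))"
  have inner: "gsum Sm f (K j) = Sm g (e ` K j)" if "j \<in> J" for j
  proof -
    have sub: "K j \<subseteq> I" using U that by blast
    have eK: "inj_on e (K j)" using e by (rule inj_on_subset) simp
    have "gsum Sm f (K j) = Sm (\<lambda>u. f (inv_into (K j) e u)) (e ` K j)" by (rule gsum_via_inj[OF eK])
    also have "\<dots> = Sm g (e ` K j)"
    proof (rule Sm_cong)
      fix u assume "u \<in> e ` K j"
      then obtain a where "a \<in> K j" "u = e a" by blast
      then show "f (inv_into (K j) e u) = g u" using eK eI sub by (auto simp: g_def inv_into_f_f)
    qed
    finally show ?thesis .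
  qed
  have "gsum Sm (\<lambda>j. gsum Sm f (K j)) J = gsum Sm (\<lambda>j. Sm g (e ` K j)) J"
    by (rule gsum_cong) (rule inner)
  also have "\<dots> = Sm (\<lambda>v. Sm g (e ` K (inv_into J d v))) (d ` J)"
    by (rule gsum_via_inj[OF d])
  also have "\<dots> = Sm g (e ` I)"
  proof (rule Sm_partition)
    have "(\<Union>v\<in>d ` J. e ` K (inv_into J d v)) = (\<Union>j\<in>J. e ` K j)"
      using d by (simp add: inv_into_f_f)
    also have "\<dots> = e ` I" by (simp add: image_UN flip: U)
    finally show "(\<Union>v\<in>d ` J. e ` K (inv_into J d v)) = e ` I" .
    fix v v' assume "v \<in> d ` J" "v' \<in> d ` J" "v \<noteq> v'"
    then obtain j j' where jj: "j \<in> J" "j' \<in> J" "v = d j" "v' = d j'" "j \<noteq> j'" by blast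
    then have "K j \<inter> K j' = {}" using D by blast
    then show "e ` K (inv_into J d v) \<inter> e ` K (inv_into J d v') = {}"
      using jj d e by (auto simp: inv_into_f_f inj_eq)
  qed
  also have "\<dots> = gsum Sm f I" using gsum_via_inj[OF eI] by (simp add: g_def)
  finally show ?thesis .
qed

lemma gsum_reindex_bij_betw:
  fixes h :: "'j::U_embeddable \<Rightarrow> 'i::U_embeddable"
  assumes "bij_betw h J I"
  shows "gsum Sm (\<lambda>j. f (h j)) J = gsum Sm f I"
proof -
  have "gsum Sm (\<lambda>j. gsum Sm f {h j}) J = gsum Sm f I"
    by (rule gsum_partition) (use assms in \<open>auto simp: bij_betw_def inj_on_def\<close>)
  then show ?thesis by (simp add: gsum_singleton)
qed

lemma gsum_UNIV_bool: "gsum Sm g (UNIV :: bool set) = g True + g False"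
proof -
  define e :: "bool \<Rightarrow> U" where "e = (\<lambda>b _. if b then 0 else 1)"
  have e: "inj_on e UNIV" by (auto simp: inj_on_def fun_eq_iff e_def)
  have "e ` UNIV = {e True, e False}" by (auto simp: UNIV_bool)
  moreover have "e True \<noteq> e False" by (auto simp: e_def fun_eq_iff)
  ultimately show ?thesis
    using gsum_via_inj[OF e, of g] e by (simp add: Sm_two)
qed

lemma gsum_union_disjoint:
  fixes A B :: "'i::U_embeddable set"
  assumes "A \<inter> B = {}"
  shows "gsum Sm f (A \<union> B) = gsum Sm f A + gsum Sm f B"
proof -
  have "gsum Sm (\<lambda>b. gsum Sm f (if b then A else B)) UNIV = gsum Sm f (A \<union> B)"
    by (rule gsum_partition) (use assms in auto)
  then show ?thesis by (simp add: gsum_UNIV_bool)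
qed

lemma gsum_mono_neutral_right:
  fixes S T :: "'i::U_embeddable set"
  assumes "S \<subseteq> T" "\<And>i. i \<in> T - S \<Longrightarrow> f i = 0"
  shows "gsum Sm f T = gsum Sm f S"
proof -
  have "T = S \<union> (T - S)" using assms(1) by blast
  then have "gsum Sm f T = gsum Sm f S + gsum Sm f (T - S)"
    by (metis Diff_disjoint gsum_union_disjoint)
  also have "gsum Sm f (T - S) = 0" by (rule gsum_neutral) (rule assms(2))
  finally show ?thesis by simp
qed

lemma gsum_eq_sum:
  fixes I :: "'i::U_embeddable set"
  assumes "finite I"
  shows "gsum Sm f I = sum f I"
  using assms
proof (induction I rule: finite_induct)
  case empty
  then show ?case by (simp add: gsum_empty)
next
  case (insert x F)
  then have "gsum Sm f (insert x F) = gsum Sm f {x} + gsum Sm f F"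
    using gsum_union_disjoint[of "{x}" F] by simp
  then show ?case using insert by (simp add: gsum_singleton)
qed

lemma gsum_Sigma:
  fixes A :: "'i::U_embeddable set" and B :: "'i \<Rightarrow> 'j::U_embeddable set"
  shows "gsum Sm f (Sigma A B) = gsum Sm (\<lambda>a. gsum Sm (\<lambda>b. f (a, b)) (B a)) A"
proof -
  have "gsum Sm (\<lambda>a. gsum Sm f ({a} \<times> B a)) A = gsum Sm f (Sigma A B)"
    by (rule gsum_partition) auto
  moreover have "gsum Sm (\<lambda>b. f (a, b)) (B a) = gsum Sm f ({a} \<times> B a)" for a
    by (rule gsum_reindex_bij_betw) (auto simp: bij_betw_def inj_on_def)
  ultimately show ?thesis by simp
qed

lemma gsum_swap:
  fixes A :: "'i::U_embeddable set" and B :: "'j::U_embeddable set"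
  shows "gsum Sm (\<lambda>a. gsum Sm (f a) B) A = gsum Sm (\<lambda>b. gsum Sm (\<lambda>a. f a b) A) B"
proof -
  have "gsum Sm (\<lambda>a. gsum Sm (f a) B) A = gsum Sm (\<lambda>(a, b). f a b) (A \<times> B)"
    by (simp add: gsum_Sigma)
  also have "\<dots> = gsum Sm (\<lambda>j. (\<lambda>(a, b). f a b) (prod.swap j)) (B \<times> A)"
    by (rule gsum_reindex_bij_betw[symmetric]) (auto simp: bij_betw_def inj_on_def)
  also have "\<dots> = gsum Sm (\<lambda>(b, a). f a b) (B \<times> A)"
    by (rule gsum_cong) auto
  also have "\<dots> = gsum Sm (\<lambda>b. gsum Sm (\<lambda>a. f a b) A) B"
    by (simp add: gsum_Sigma)
  finally show ?thesis .
qed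

lemma gsum_add:
  fixes I :: "'i::U_embeddable set"
  shows "gsum Sm (\<lambda>i. f i + g i) I = gsum Sm f I + gsum Sm g I"
  using gsum_swap[of "\<lambda>i b. if b then f i else g i" UNIV I] by (simp add: gsum_UNIV_bool)

lemma gsum_sum_commute:
  fixes I :: "'i::U_embeddable set"
  assumes "finite K"
  shows "gsum Sm (\<lambda>i. \<Sum>k\<in>K. f i k) I = (\<Sum>k\<in>K. gsum Sm (\<lambda>i. f i k) I)"
  using assms by (induction K rule: finite_induct) (simp_all add: gsum_neutral gsum_add)

end

section \<open>Complete semiring-semimodule pairs\<close>

lemma prod_list_zero: "(0 :: 'a :: {semiring_0, monoid_mult}) \<in> set xs \<Longrightarrow> prod_list xs = 0"
  by (induction xs) auto

locale complete_semiring_semimodule_pair =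
  fixes ssum :: "(U \<Rightarrow> 's::{semiring_0,monoid_mult}) \<Rightarrow> U set \<Rightarrow> 's"
    and act :: "'s \<Rightarrow> 'v::comm_monoid_add \<Rightarrow> 'v"
    and vsum :: "(U \<Rightarrow> 'v) \<Rightarrow> U set \<Rightarrow> 'v"
    and iprod :: "(nat \<Rightarrow> 's) \<Rightarrow> 'v"
  assumes complete_ss_pair: "complete_ss_pair ssum act vsum iprod"
begin

lemma ssum_complete: "complete_sum ssum"
  using complete_ss_pair unfolding complete_ss_pair_def by (elim conjE)

lemma vsum_complete: "complete_sum vsum"
  using complete_ss_pair unfolding complete_ss_pair_def by (elim conjE)

lemma act_add_left: "act (s1 + s2) v = act s1 v + act s2 v"
  using complete_ss_pair unfolding complete_ss_pair_def by (elim conjE) blast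

lemma act_add_right: "act s (v1 + v2) = act s v1 + act s v2"
  using complete_ss_pair unfolding complete_ss_pair_def by (elim conjE) blast

lemma act_mult: "act (s1 * s2) v = act s1 (act s2 v)"
  using complete_ss_pair unfolding complete_ss_pair_def by (elim conjE) blast

lemma act_one [simp]: "act 1 v = v"
  using complete_ss_pair unfolding complete_ss_pair_def by (elim conjE) blast

lemma act_zero_left [simp]: "act 0 v = 0"
  using complete_ss_pair unfolding complete_ss_pair_def by (elim conjE) blast

lemma act_zero_right [simp]: "act s 0 = 0"
  using complete_ss_pair unfolding complete_ss_pair_def by (elim conjE) blast

lemma iprod_unfold: "iprod s = act (s 0) (iprod (\<lambda>t. s (Suc t)))"
proof -
  have "\<forall>s. iprod s = act (s 0) (iprod (\<lambda>j. s (Suc j)))"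
    using complete_ss_pair unfolding complete_ss_pair_def by (elim conjE) assumption
  then show ?thesis ..
qed

lemma act_gsum_left: "act (gsum ssum f I) v = gsum vsum (\<lambda>i. act (f i) v) I"
proof -
  have "\<forall>f I v. act (ssum f I) v = vsum (\<lambda>i. act (f i) v) I"
    using complete_ss_pair unfolding complete_ss_pair_def by (elim conjE) assumption
  then show ?thesis by (simp add: gsum_def Let_def)
qed

lemma act_gsum_right: "act s (gsum vsum g I) = gsum vsum (\<lambda>i. act s (g i)) I"
proof -
  have "\<forall>s g I. act s (vsum g I) = vsum (\<lambda>i. act s (g i)) I"
    using complete_ss_pair unfolding complete_ss_pair_def by (elim conjE) assumption
  then show ?thesis by (simp add: gsum_def Let_def)
qed

lemma gsum_mult_right: "gsum ssum (\<lambda>i. f i * c) I = gsum ssum f I * c"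
proof -
  have "\<forall>c f I. ssum (\<lambda>i. f i * c) I = ssum f I * c"
    using complete_ss_pair unfolding complete_ss_pair_def by (elim conjE) assumption
  then show ?thesis by (simp add: gsum_def Let_def)
qed

lemma act_sum_left: "act (\<Sum>k\<in>K. f k) v = (\<Sum>k\<in>K. act (f k) v)"
  by (induction K rule: infinite_finite_induct) (auto simp: act_add_left)

lemma act_sum_right: "act s (\<Sum>k\<in>K. g k) = (\<Sum>k\<in>K. act s (g k))"
  by (induction K rule: infinite_finite_induct) (auto simp: act_add_right)

lemma iprod_prefix: "iprod s = act (prod_list (map s [0..<m])) (iprod (\<lambda>t. s (t + m)))"
proof (induction m arbitrary: s)
  case 0
  then show ?case by simp
next
  case (Suc m)
  have "prod_list (map s [0..<Suc m]) = s 0 * prod_list (map (\<lambda>t. s (Suc t)) [0..<m])"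
    by (simp add: upt_conv_Cons map_Suc_upt[symmetric] comp_def del: upt_Suc)
  moreover have "iprod (\<lambda>t. s (Suc t)) = act (prod_list (map (\<lambda>t. s (Suc t)) [0..<m])) (iprod (\<lambda>t. s (Suc (t + m))))"
    using Suc.IH[of "\<lambda>t. s (Suc t)"] by simp
  ultimately show ?case by (subst iprod_unfold) (simp add: act_mult)
qed

lemma iprod_zero: "s t = 0 \<Longrightarrow> iprod s = 0"
  using iprod_prefix[of s "Suc t"] by (simp add: prod_list_zero)

end

section \<open>Pushdown transition matrices and their paths\<close>

lemma infinite_shift: "infinite {t. Q (t + m)} \<longleftrightarrow> infinite {t::nat. Q t}"
  unfolding INFM_iff_infinite[symmetric] INFM_nat_le
proof (intro iffI allI)
  fix a
  assume "\<forall>a. \<exists>t\<ge>a. Q (t + m)"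
  then obtain t where "t \<ge> a" "Q (t + m)" by blast
  then show "\<exists>t\<ge>a. Q t" by (intro exI[of _ "t + m"]) auto
next
  fix a
  assume "\<forall>a. \<exists>t\<ge>a. Q t"
  then obtain t where "t \<ge> a + m" "Q t" by blast
  then show "\<exists>t\<ge>a. Q (t + m)" by (intro exI[of _ "t - m"]) auto
qed

definition pushed_on :: "'a list \<Rightarrow> 'a list \<Rightarrow> bool" where
  "pushed_on w v \<longleftrightarrow> (\<exists>u. u \<noteq> [] \<and> v = u @ w)"

definition lift_state :: "'a list \<Rightarrow> 'a list \<times> nat \<Rightarrow> 'a list \<times> nat" where
  "lift_state w x = (fst x @ w, snd x)"

lemma inj_lift_state: "inj (lift_state w)"
  by (auto simp: inj_def lift_state_def prod_eq_iff)

lemma lift_state_image: "lift_state w ` {x. fst x \<noteq> []} = {x. pushed_on w (fst x)}"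
proof (intro equalityI subsetI)
  fix x :: "'a list \<times> nat"
  assume "x \<in> {x. pushed_on w (fst x)}"
  then obtain u where "u \<noteq> []" "fst x = u @ w" by (auto simp: pushed_on_def)
  then show "x \<in> lift_state w ` {x. fst x \<noteq> []}"
    by (intro image_eqI[of _ _ "(u, snd x)"]) (auto simp: lift_state_def prod_eq_iff)
qed (auto simp: lift_state_def pushed_on_def)

lemma fst_lift_state [simp]: "fst (lift_state w x) = fst x @ w"
  by (simp add: lift_state_def)

lemma snd_lift_state [simp]: "snd (lift_state w x) = snd x"
  by (simp add: lift_state_def)

lemma lift_state_inv:
  assumes "pushed_on w (fst y)"
  shows "lift_state w (inv (lift_state w) y) = y \<and> fst (inv (lift_state w) y) \<noteq> []"
proof -
  obtain x where "fst x \<noteq> []" "y = lift_state w x"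
    using assms lift_state_image[of w] by (metis (mono_tags) imageE mem_Collect_eq)
  then show ?thesis by (simp add: inv_f_f[OF inj_lift_state])
qed

locale pushdown_system = complete_semiring_semimodule_pair ssum act vsum iprod
  for ssum :: "(U \<Rightarrow> 's::{semiring_0,monoid_mult}) \<Rightarrow> U set \<Rightarrow> 's"
    and act :: "'s \<Rightarrow> 'v::comm_monoid_add \<Rightarrow> 'v"
    and vsum :: "(U \<Rightarrow> 'v) \<Rightarrow> U set \<Rightarrow> 'v"
    and iprod :: "(nat \<Rightarrow> 's) \<Rightarrow> 'v" +
  fixes n l :: nat
    and M :: "'g::finite list \<Rightarrow> 'g list \<Rightarrow> nat \<Rightarrow> nat \<Rightarrow> 's"
  assumes pushdown: "pushdown_matrix n M"
begin

lemma M_Nil: "i \<in> {1..n} \<Longrightarrow> j \<in> {1..n} \<Longrightarrow> M [] v i j = 0"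
  using pushdown unfolding pushdown_matrix_def by auto

lemma M_Cons: "i \<in> {1..n} \<Longrightarrow> j \<in> {1..n} \<Longrightarrow> M (p # x) (\<pi> @ x) i j = M [p] \<pi> i j"
  using pushdown unfolding pushdown_matrix_def by auto

lemma M_no_transition:
  "i \<in> {1..n} \<Longrightarrow> j \<in> {1..n} \<Longrightarrow> \<nexists>p x \<pi>. u = p # x \<and> v = \<pi> @ x \<Longrightarrow> M u v i j = 0"
  using pushdown unfolding pushdown_matrix_def by blast

lemma M_append_stack:
  assumes "u \<noteq> []" "i \<in> {1..n}" "j \<in> {1..n}"
  shows "M (u @ w) (v @ w) i j = M u v i j"
proof -
  obtain p x where u: "u = p # x" using assms(1) by (cases u) auto
  show ?thesis
  proof (cases "\<exists>\<pi>. v = \<pi> @ x")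
    case True
    then obtain \<pi> where "v = \<pi> @ x" by blast
    then show ?thesis using M_Cons[OF assms(2,3), of p "x @ w" \<pi>] M_Cons[OF assms(2,3), of p x \<pi>]
      by (simp add: u)
  next
    case False
    then have "\<nexists>p' x' \<pi>. u @ w = p' # x' \<and> v @ w = \<pi> @ x'" using u by auto
    then show ?thesis using False u by (simp add: M_no_transition[OF assms(2,3)])
  qed
qed

text \<open>A transition pops at most one symbol, so a path above w cannot get below w without
  visiting w.\<close>

lemma M_leave_pushed_on_zero:
  assumes "u \<noteq> []" "i \<in> {1..n}" "j \<in> {1..n}" "v \<noteq> w" "\<not> pushed_on w v"
  shows "M (u @ w) v i j = 0"
proof (rule M_no_transition[OF assms(2,3)])
  show "\<nexists>p x \<pi>. u @ w = p # x \<and> v = \<pi> @ x"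
  proof
    assume "\<exists>p x \<pi>. u @ w = p # x \<and> v = \<pi> @ x"
    then obtain p x \<pi> where h: "u @ w = p # x" "v = \<pi> @ x" by blast
    obtain u' where "u = p # u'" using h(1) assms(1) by (cases u) auto
    then have "v = (\<pi> @ u') @ w" using h by simp
    then show False using assms(4,5) unfolding pushed_on_def by (cases "\<pi> @ u'") auto
  qed
qed

primrec fpath_weight :: "'g list \<times> nat \<Rightarrow> ('g list \<times> nat) list \<Rightarrow> 's" where
  "fpath_weight a [] = 1"
| "fpath_weight a (b # xs) = M (fst a) (fst b) (snd a) (snd b) * fpath_weight b xs"

lemma fpath_weight_snoc:
  "fpath_weight a (xs @ [b]) = fpath_weight a xs * M (fst (last (a # xs))) (fst b) (snd (last (a # xs))) (snd b)"
  by (induction xs arbitrary: a) (auto simp: mult.assoc)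

lemma prod_path_weight_eq_fpath_weight:
  "prod_list (map (path_weight M \<pi> i \<sigma>) [0..<m]) = fpath_weight (\<pi>, i) (map \<sigma> [0..<m])"
proof (induction m)
  case 0
  then show ?case by simp
next
  case (Suc m)
  have "last ((\<pi>, i) # map \<sigma> [0..<m]) = (if m = 0 then (\<pi>, i) else \<sigma> (m - 1))"
    by (cases m) (auto simp: last_map)
  then show ?case
    using Suc by (simp add: fpath_weight_snoc path_weight_def Let_def)
qed

lemma fpath_weight_zero:
  assumes "t < length xs" "path_weight M \<pi> i ((!) xs) t = 0"
  shows "fpath_weight (\<pi>, i) xs = 0"
proof -
  have "fpath_weight (\<pi>, i) xs = prod_list (map (path_weight M \<pi> i ((!) xs)) [0..<length xs])"
    using prod_path_weight_eq_fpath_weight[of \<pi> i "(!) xs" "length xs"] by (simp add: map_nth)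
  also have "\<dots> = 0" by (rule prod_list_zero) (use assms in force)
  finally show ?thesis .
qed

lemma fpath_weight_lift:
  assumes "fst a \<noteq> []" "\<forall>y\<in>set (butlast zs). fst y \<noteq> []" "snd a \<in> {1..n}" "\<forall>y\<in>set zs. snd y \<in> {1..n}"
  shows "fpath_weight (lift_state w a) (map (lift_state w) zs) = fpath_weight a zs"
  using assms
proof (induction zs arbitrary: a)
  case Nil
  then show ?case by simp
next
  case (Cons b zs)
  have "M (fst a @ w) (fst b @ w) (snd a) (snd b) = M (fst a) (fst b) (snd a) (snd b)"
    by (rule M_append_stack) (use Cons.prems in auto)
  moreover have "fpath_weight (lift_state w b) (map (lift_state w) zs) = fpath_weight b zs" if "zs \<noteq> []"
    by (rule Cons.IH) (use Cons.prems that in auto)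
  ultimately show ?case by (cases "zs = []") simp_all
qed

definition omega_paths :: "(nat \<Rightarrow> 'g list \<times> nat) set" where
  "omega_paths = {\<sigma>. (\<forall>t. snd (\<sigma> t) \<in> {1..n}) \<and> infinite {t. snd (\<sigma> t) \<le> l}}"

definition state_lists :: "nat \<Rightarrow> ('g list \<times> nat) list set" where
  "state_lists m = {xs. length xs = m \<and> (\<forall>x\<in>set xs. snd x \<in> {1..n})}"

abbreviation m_omega :: "'g list \<Rightarrow> nat \<Rightarrow> 'v" where
  "m_omega \<equiv> momega vsum iprod n M l"

lemma m_omega_eq: "m_omega \<pi> i = gsum vsum (\<lambda>\<sigma>. iprod (path_weight M \<pi> i \<sigma>)) omega_paths"
  unfolding momega_def omega_paths_def by simp

lemma comp_in_omega_paths_iff: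
  "(\<And>x. snd (f x) = snd x) \<Longrightarrow> f \<circ> \<sigma> \<in> omega_paths \<longleftrightarrow> \<sigma> \<in> omega_paths"
  by (simp add: omega_paths_def)

lemma conc_in_omega_paths_iff:
  "xs \<frown> \<tau> \<in> omega_paths \<longleftrightarrow> (\<forall>x\<in>set xs. snd x \<in> {1..n}) \<and> \<tau> \<in> omega_paths"
proof -
  have "(\<forall>t. snd ((xs \<frown> \<tau>) t) \<in> {1..n}) \<longleftrightarrow> (\<forall>x\<in>range (xs \<frown> \<tau>). snd x \<in> {1..n})"
    by blast
  moreover have "infinite {t. snd ((xs \<frown> \<tau>) t) \<le> l} \<longleftrightarrow> infinite {t. snd (\<tau> t) \<le> l}"
    using infinite_shift[of "\<lambda>t. snd ((xs \<frown> \<tau>) t) \<le> l" "length xs"] by simp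
  ultimately show ?thesis by (auto simp: omega_paths_def)
qed

lemma bij_betw_conc_omega_paths:
  assumes "Xs \<subseteq> state_lists m"
  shows "bij_betw (\<lambda>(xs, \<tau>). xs \<frown> \<tau>) (Xs \<times> omega_paths) {\<sigma> \<in> omega_paths. prefix m \<sigma> \<in> Xs}"
proof -
  have len: "length xs = m" if "xs \<in> Xs" for xs using assms that by (auto simp: state_lists_def)
  have rng: "\<forall>x\<in>set xs. snd x \<in> {1..n}" if "xs \<in> Xs" for xs using assms that by (auto simp: state_lists_def)
  show ?thesis
  proof (rule bij_betw_imageI)
    show "inj_on (\<lambda>(xs, \<tau>). xs \<frown> \<tau>) (Xs \<times> omega_paths)"
      by (rule inj_onI) (auto simp: len)
    show "(\<lambda>(xs, \<tau>). xs \<frown> \<tau>) ` (Xs \<times> omega_paths) = {\<sigma> \<in> omega_paths. prefix m \<sigma> \<in> Xs}"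
    proof (intro equalityI subsetI)
      fix \<sigma> assume "\<sigma> \<in> (\<lambda>(xs, \<tau>). xs \<frown> \<tau>) ` (Xs \<times> omega_paths)"
      then show "\<sigma> \<in> {\<sigma> \<in> omega_paths. prefix m \<sigma> \<in> Xs}"
        using len rng by (auto simp: conc_in_omega_paths_iff simp flip: len)
    next
      fix \<sigma> assume \<sigma>: "\<sigma> \<in> {\<sigma> \<in> omega_paths. prefix m \<sigma> \<in> Xs}"
      have "\<sigma> = prefix m \<sigma> \<frown> suffix m \<sigma>" by (rule prefix_suffix)
      with \<sigma> have "suffix m \<sigma> \<in> omega_paths" by (metis (mono_tags) conc_in_omega_paths_iff mem_Collect_eq)
      then show "\<sigma> \<in> (\<lambda>(xs, \<tau>). xs \<frown> \<tau>) ` (Xs \<times> omega_paths)"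
        using \<sigma> by (intro image_eqI[of _ _ "(prefix m \<sigma>, suffix m \<sigma>)"]) (auto simp flip: prefix_suffix)
    qed
  qed
qed

lemma path_weight_conc:
  "path_weight M \<pi> i (xs \<frown> \<tau>) (t + length xs) =
   path_weight M (fst (last ((\<pi>, i) # xs))) (snd (last ((\<pi>, i) # xs))) \<tau> t"
proof (cases t)
  case 0
  have "last ((\<pi>, i) # xs) = (if xs = [] then (\<pi>, i) else xs ! (length xs - 1))"
    by (simp add: last_conv_nth)
  then show ?thesis using 0 by (auto simp: path_weight_def Let_def)
next
  case (Suc t')
  then show ?thesis by (simp add: path_weight_def Let_def)
qed

lemma iprod_path_weight_conc:
  "iprod (path_weight M \<pi> i (xs \<frown> \<tau>)) =
   act (fpath_weight (\<pi>, i) xs) (iprod (path_weight M (fst (last ((\<pi>, i) # xs))) (snd (last ((\<pi>, i) # xs))) \<tau>))"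
proof -
  have "map (xs \<frown> \<tau>) [0..<length xs] = xs"
    using prefix_conc_length[of xs \<tau>] by (simp add: subsequence_def)
  then show ?thesis
    using iprod_prefix[of "path_weight M \<pi> i (xs \<frown> \<tau>)" "length xs"]
    by (simp add: prod_path_weight_eq_fpath_weight path_weight_conc)
qed

lemma m_omega_prefix_decomposition:
  assumes "Xs \<subseteq> state_lists m"
  shows "gsum vsum (\<lambda>\<sigma>. iprod (path_weight M \<pi> i \<sigma>)) {\<sigma> \<in> omega_paths. prefix m \<sigma> \<in> Xs} =
         gsum vsum (\<lambda>xs. act (fpath_weight (\<pi>, i) xs) (case_prod m_omega (last ((\<pi>, i) # xs)))) Xs"
proof -
  have "gsum vsum (\<lambda>\<sigma>. iprod (path_weight M \<pi> i \<sigma>)) {\<sigma> \<in> omega_paths. prefix m \<sigma> \<in> Xs} =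
        gsum vsum (\<lambda>j. iprod (path_weight M \<pi> i ((\<lambda>(xs, \<tau>). xs \<frown> \<tau>) j))) (Xs \<times> omega_paths)"
    by (rule gsum_reindex_bij_betw[OF vsum_complete bij_betw_conc_omega_paths[OF assms], symmetric])
  also have "\<dots> = gsum vsum (\<lambda>(xs, \<tau>). iprod (path_weight M \<pi> i (xs \<frown> \<tau>))) (Xs \<times> omega_paths)"
    by (rule gsum_cong[OF vsum_complete]) auto
  also have "\<dots> = gsum vsum (\<lambda>xs. gsum vsum (\<lambda>\<tau>. iprod (path_weight M \<pi> i (xs \<frown> \<tau>))) omega_paths) Xs"
    by (simp add: gsum_Sigma[OF vsum_complete])
  also have "\<dots> = gsum vsum (\<lambda>xs. act (fpath_weight (\<pi>, i) xs) (case_prod m_omega (last ((\<pi>, i) # xs)))) Xs"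
    by (simp add: iprod_path_weight_conc act_gsum_right m_omega_eq case_prod_beta)
  finally show ?thesis .
qed

lemma m_omega_first_step:
  "m_omega \<pi> i = gsum vsum (\<lambda>x. act (M \<pi> (fst x) i (snd x)) (m_omega (fst x) (snd x))) (UNIV \<times> {1..n})"
proof -
  have "omega_paths = {\<sigma> \<in> omega_paths. prefix 1 \<sigma> \<in> state_lists 1}"
    by (auto simp: omega_paths_def state_lists_def subsequence_def)
  then have "m_omega \<pi> i =
      gsum vsum (\<lambda>xs. act (fpath_weight (\<pi>, i) xs) (case_prod m_omega (last ((\<pi>, i) # xs)))) (state_lists 1)"
    using m_omega_prefix_decomposition[of "state_lists 1" 1 \<pi> i] by (simp add: m_omega_eq)
  also have "\<dots> = gsum vsum (\<lambda>x. act (M \<pi> (fst x) i (snd x)) (m_omega (fst x) (snd x))) (UNIV \<times> {1..n})"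
  proof -
    have "bij_betw (\<lambda>x. [x]) (UNIV \<times> {1..n}) (state_lists 1)"
      by (rule bij_betw_imageI) (auto simp: inj_on_def state_lists_def length_Suc_conv)
    from gsum_reindex_bij_betw[OF vsum_complete this,
        of "\<lambda>xs. act (fpath_weight (\<pi>, i) xs) (case_prod m_omega (last ((\<pi>, i) # xs)))"]
    show ?thesis by (simp add: case_prod_beta)
  qed
  finally show ?thesis .
qed

lemma m_omega_Nil: "i \<in> {1..n} \<Longrightarrow> m_omega [] i = 0"
  by (subst m_omega_first_step) (auto intro: gsum_neutral[OF vsum_complete] simp: M_Nil)

lemma bij_betw_snoc_state_lists:
  "bij_betw (\<lambda>(x, zs). zs @ [x]) ((UNIV \<times> {1..n}) \<times> state_lists m) (state_lists (Suc m))"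
proof (rule bij_betw_imageI)
  show "inj_on (\<lambda>(x, zs). zs @ [x]) ((UNIV \<times> {1..n}) \<times> state_lists m)"
    by (auto simp: inj_on_def)
  show "(\<lambda>(x, zs). zs @ [x]) ` ((UNIV \<times> {1..n}) \<times> state_lists m) = state_lists (Suc m)"
  proof (intro equalityI subsetI)
    fix ys assume ys: "ys \<in> state_lists (Suc m)"
    then obtain zs x where "ys = zs @ [x]" unfolding state_lists_def by (cases ys rule: rev_cases) auto
    with ys show "ys \<in> (\<lambda>(x, zs). zs @ [x]) ` ((UNIV \<times> {1..n}) \<times> state_lists m)"
      unfolding state_lists_def by (intro image_eqI[of _ _ "(x, zs)"]) (auto simp: mem_Times_iff)
  qed (auto simp: state_lists_def)
qed

lemma bmat_pow_Suc_eq_gsum_paths: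
  assumes "i \<in> {1..n}" "k \<in> {1..n}"
  shows "gsum ssum (\<lambda>ys. fpath_weight (\<pi>1, i) (ys @ [(\<pi>2, k)])) (state_lists m) =
         bmat_pow ssum n M (Suc m) \<pi>1 \<pi>2 i k"
  using assms(2)
proof (induction m arbitrary: \<pi>2 k)
  case 0
  have "state_lists 0 = {[]}" by (auto simp: state_lists_def)
  then have "gsum ssum (\<lambda>ys. fpath_weight (\<pi>1, i) (ys @ [(\<pi>2, k)])) (state_lists 0) = M \<pi>1 \<pi>2 i k"
    by (simp add: gsum_singleton[OF ssum_complete])
  also have "\<dots> = gsum ssum (\<lambda>p. \<Sum>k'=1..n. (if \<pi>1 = p \<and> i = k' then 1 else 0) * M p \<pi>2 k' k) {\<pi>1}"
    using assms(1) by (simp add: gsum_singleton[OF ssum_complete] if_distrib[of "\<lambda>x. x * _"] cong: if_cong)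
  also have "\<dots> = bmat_pow ssum n M (Suc 0) \<pi>1 \<pi>2 i k"
    unfolding bmat_pow.simps bmat_mult_def
    by (rule gsum_mono_neutral_right[OF ssum_complete, symmetric]) auto
  finally show ?case .
next
  case (Suc m)
  have "gsum ssum (\<lambda>ys. fpath_weight (\<pi>1, i) (ys @ [(\<pi>2, k)])) (state_lists (Suc m)) =
      gsum ssum (\<lambda>(x, zs). fpath_weight (\<pi>1, i) ((zs @ [x]) @ [(\<pi>2, k)])) ((UNIV \<times> {1..n}) \<times> state_lists m)"
    by (subst gsum_reindex_bij_betw[OF ssum_complete bij_betw_snoc_state_lists, symmetric])
      (auto intro: gsum_cong[OF ssum_complete])
  also have "\<dots> = gsum ssum (\<lambda>x. gsum ssum (\<lambda>zs. fpath_weight (\<pi>1, i) (zs @ [x]) * M (fst x) \<pi>2 (snd x) k)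
      (state_lists m)) (UNIV \<times> {1..n})"
    using fpath_weight_snoc[of "(\<pi>1, i)" "_ @ [_]" "(\<pi>2, k)"]
    by (simp add: gsum_Sigma[OF ssum_complete])
  also have "\<dots> = gsum ssum (\<lambda>x. bmat_pow ssum n M (Suc m) \<pi>1 (fst x) i (snd x) * M (fst x) \<pi>2 (snd x) k)
      (UNIV \<times> {1..n})"
    using Suc.IH by (intro gsum_cong[OF ssum_complete]) (auto simp: gsum_mult_right)
  also have "\<dots> = bmat_pow ssum n M (Suc (Suc m)) \<pi>1 \<pi>2 i k"
    by (simp add: bmat_mult_def gsum_Sigma[OF ssum_complete] gsum_eq_sum[OF ssum_complete])
  finally show ?case .
qed

lemma bmat_star_eq_gsum_pow_Suc:
  "bmat_star ssum n M [q] [] i k = gsum ssum (\<lambda>m. bmat_pow ssum n M (Suc m) [q] [] i k) UNIV"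
proof -
  have "bmat_star ssum n M [q] [] i k = gsum ssum (\<lambda>m. bmat_pow ssum n M m [q] [] i k) (range Suc)"
    unfolding bmat_star_def
  proof (rule gsum_mono_neutral_right[OF ssum_complete])
    fix m assume "m \<in> UNIV - range Suc"
    then have "m = 0" by (cases m) auto
    then show "bmat_pow ssum n M m [q] [] i k = 0" by simp
  qed simp
  also have "\<dots> = gsum ssum (\<lambda>m. bmat_pow ssum n M (Suc m) [q] [] i k) UNIV"
    by (rule gsum_reindex_bij_betw[OF ssum_complete, symmetric]) (simp add: bij_betw_def)
  finally show ?thesis .
qed

section \<open>Decomposition at the first visit of a stack\<close>

lemma path_weight_leave_pushed_on_zero:
  assumes "u \<noteq> []" "i \<in> {1..n}"
    and "\<forall>t\<le>t0. snd (\<sigma> t) \<in> {1..n} \<and> fst (\<sigma> t) \<noteq> w" "\<not> pushed_on w (fst (\<sigma> t0))"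
  obtains t where "t \<le> t0" "path_weight M (u @ w) i \<sigma> t = 0"
proof -
  obtain t where t: "\<not> pushed_on w (fst (\<sigma> t))" "\<And>t'. t' < t \<Longrightarrow> pushed_on w (fst (\<sigma> t'))"
    using exists_least_iff[of "\<lambda>t. \<not> pushed_on w (fst (\<sigma> t))"] assms(4) by blast
  have "t \<le> t0" using t(2) assms(4) by (meson not_le)
  define a where "a = (if t = 0 then (u @ w, i) else \<sigma> (t - 1))"
  have "pushed_on w (fst a)"
    using assms(1) t(2)[of "t - 1"] by (cases t) (auto simp: a_def pushed_on_def)
  then obtain u' where u': "u' \<noteq> []" "fst a = u' @ w" by (auto simp: pushed_on_def)
  have "snd a \<in> {1..n}" using assms(2,3) \<open>t \<le> t0\<close> by (auto simp: a_def)
  then have "M (u' @ w) (fst (\<sigma> t)) (snd a) (snd (\<sigma> t)) = 0"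
    using u'(1) assms(3) \<open>t \<le> t0\<close> t(1) by (intro M_leave_pushed_on_zero) auto
  then have "path_weight M (u @ w) i \<sigma> t = 0"
    by (simp add: path_weight_def Let_def u'(2) flip: a_def)
  with \<open>t \<le> t0\<close> show thesis by (rule that)
qed

lemma path_weight_lift:
  assumes "\<pi> \<noteq> []" "i \<in> {1..n}" "\<forall>t. snd (\<sigma> t) \<in> {1..n} \<and> fst (\<sigma> t) \<noteq> []"
  shows "path_weight M (\<pi> @ w) i (lift_state w \<circ> \<sigma>) = path_weight M \<pi> i \<sigma>"
proof
  fix t show "path_weight M (\<pi> @ w) i (lift_state w \<circ> \<sigma>) t = path_weight M \<pi> i \<sigma> t"
    using assms by (cases t) (simp_all add: path_weight_def Let_def M_append_stack)
qed

lemma bij_betw_lift_omega_paths: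
  "bij_betw ((\<circ>) (lift_state w)) {\<sigma> \<in> omega_paths. \<forall>t. fst (\<sigma> t) \<noteq> []}
     {\<tau> \<in> omega_paths. \<forall>t. pushed_on w (fst (\<tau> t))}"
proof (rule bij_betw_imageI)
  show "inj_on ((\<circ>) (lift_state w)) {\<sigma> \<in> omega_paths. \<forall>t. fst (\<sigma> t) \<noteq> []}"
    by (rule inj_onI) (simp add: fun_eq_iff inj_eq[OF inj_lift_state])
  show "(\<circ>) (lift_state w) ` {\<sigma> \<in> omega_paths. \<forall>t. fst (\<sigma> t) \<noteq> []} =
        {\<tau> \<in> omega_paths. \<forall>t. pushed_on w (fst (\<tau> t))}"
  proof (intro equalityI subsetI)
    fix \<tau> assume \<tau>: "\<tau> \<in> {\<tau> \<in> omega_paths. \<forall>t. pushed_on w (fst (\<tau> t))}"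
    define \<sigma> where "\<sigma> = inv (lift_state w) \<circ> \<tau>"
    have "lift_state w (\<sigma> t) = \<tau> t \<and> fst (\<sigma> t) \<noteq> []" for t
      using \<tau> lift_state_inv[of w "\<tau> t"] by (simp add: \<sigma>_def)
    then have "\<tau> = lift_state w \<circ> \<sigma>" "\<forall>t. fst (\<sigma> t) \<noteq> []" by (simp_all add: fun_eq_iff)
    moreover from this \<tau> have "\<sigma> \<in> omega_paths" by (simp add: comp_in_omega_paths_iff)
    ultimately show "\<tau> \<in> (\<circ>) (lift_state w) ` {\<sigma> \<in> omega_paths. \<forall>t. fst (\<sigma> t) \<noteq> []}"
      by blast
  next
    fix \<tau> assume "\<tau> \<in> (\<circ>) (lift_state w) ` {\<sigma> \<in> omega_paths. \<forall>t. fst (\<sigma> t) \<noteq> []}"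
    then obtain \<sigma> where \<sigma>: "\<sigma> \<in> omega_paths" "\<forall>t. fst (\<sigma> t) \<noteq> []" "\<tau> = lift_state w \<circ> \<sigma>"
      by blast
    then have "\<tau> \<in> omega_paths" by (simp add: comp_in_omega_paths_iff)
    moreover have "pushed_on w (fst (\<tau> t))" for t using \<sigma>(2,3) by (auto simp: pushed_on_def)
    ultimately show "\<tau> \<in> {\<tau> \<in> omega_paths. \<forall>t. pushed_on w (fst (\<tau> t))}" by blast
  qed
qed

lemma bij_betw_lift_state_lists:
  "bij_betw (map (lift_state w)) {ys \<in> state_lists m. \<forall>y\<in>set ys. fst y \<noteq> []}
     {xs \<in> state_lists m. \<forall>x\<in>set xs. pushed_on w (fst x)}"
proof (rule bij_betw_imageI)
  show "inj_on (map (lift_state w)) {ys \<in> state_lists m. \<forall>y\<in>set ys. fst y \<noteq> []}"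
    by (auto simp: inj_on_def inj_map_eq_map[OF inj_lift_state])
  show "map (lift_state w) ` {ys \<in> state_lists m. \<forall>y\<in>set ys. fst y \<noteq> []} =
        {xs \<in> state_lists m. \<forall>x\<in>set xs. pushed_on w (fst x)}"
  proof (intro equalityI subsetI)
    fix xs assume xs: "xs \<in> {xs \<in> state_lists m. \<forall>x\<in>set xs. pushed_on w (fst x)}"
    then have "xs = map (lift_state w) (map (inv (lift_state w)) xs)"
      unfolding map_map by (intro map_idI[symmetric]) (metis (mono_tags) comp_apply lift_state_inv mem_Collect_eq)
    moreover have "snd (inv (lift_state w) x) = snd x \<and> fst (inv (lift_state w) x) \<noteq> []"
      if "x \<in> set xs" for x
      using lift_state_inv[of w x] xs that snd_lift_state[of w "inv (lift_state w) x"] by auto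
    ultimately show "xs \<in> map (lift_state w) ` {ys \<in> state_lists m. \<forall>y\<in>set ys. fst y \<noteq> []}"
      using xs by (intro image_eqI[of _ _ "map (inv (lift_state w)) xs"]) (auto simp: state_lists_def)
  next
    fix xs assume "xs \<in> map (lift_state w) ` {ys \<in> state_lists m. \<forall>y\<in>set ys. fst y \<noteq> []}"
    then obtain ys where "ys \<in> state_lists m" "\<forall>y\<in>set ys. fst y \<noteq> []" "xs = map (lift_state w) ys"
      by blast
    then show "xs \<in> {xs \<in> state_lists m. \<forall>x\<in>set xs. pushed_on w (fst x)}"
      by (auto simp: state_lists_def pushed_on_def)
  qed
qed

lemma m_omega_never_visiting:
  assumes i: "i \<in> {1..n}"
  shows "gsum vsum (\<lambda>\<sigma>. iprod (path_weight M (q # w) i \<sigma>)) {\<sigma> \<in> omega_paths. \<forall>t. fst (\<sigma> t) \<noteq> w} =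
         m_omega [q] i"
proof -
  let ?W = "\<lambda>\<pi> \<sigma>. iprod (path_weight M \<pi> i \<sigma>)"
  define O0 where "O0 = {\<sigma> \<in> omega_paths. \<forall>t. fst (\<sigma> t) \<noteq> []}"
  define A where "A = {\<tau> \<in> omega_paths. \<forall>t. pushed_on w (fst (\<tau> t))}"
  have "gsum vsum (?W (q # w)) {\<sigma> \<in> omega_paths. \<forall>t. fst (\<sigma> t) \<noteq> w} = gsum vsum (?W (q # w)) A"
  proof (rule gsum_mono_neutral_right[OF vsum_complete])
    show "A \<subseteq> {\<sigma> \<in> omega_paths. \<forall>t. fst (\<sigma> t) \<noteq> w}" by (auto simp: A_def pushed_on_def)
    fix \<sigma> assume \<sigma>: "\<sigma> \<in> {\<sigma> \<in> omega_paths. \<forall>t. fst (\<sigma> t) \<noteq> w} - A"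
    then obtain t0 where "\<not> pushed_on w (fst (\<sigma> t0))" by (auto simp: A_def)
    moreover have "\<forall>t\<le>t0. snd (\<sigma> t) \<in> {1..n} \<and> fst (\<sigma> t) \<noteq> w" using \<sigma> by (auto simp: omega_paths_def)
    ultimately obtain t where "path_weight M ([q] @ w) i \<sigma> t = 0"
      using path_weight_leave_pushed_on_zero[of "[q]" i t0 \<sigma> w] i by auto
    then show "?W (q # w) \<sigma> = 0" by (auto intro: iprod_zero)
  qed
  also have "\<dots> = gsum vsum (\<lambda>\<sigma>. ?W (q # w) (lift_state w \<circ> \<sigma>)) O0"
    unfolding A_def O0_def by (rule gsum_reindex_bij_betw[OF vsum_complete bij_betw_lift_omega_paths, symmetric])
  also have "\<dots> = gsum vsum (?W [q]) O0"
    using i path_weight_lift[of "[q]" i _ w]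
    by (intro gsum_cong[OF vsum_complete]) (auto simp: O0_def omega_paths_def)
  also have "\<dots> = m_omega [q] i"
    unfolding m_omega_eq O0_def
  proof (rule gsum_mono_neutral_right[OF vsum_complete, symmetric])
    fix \<sigma> assume "\<sigma> \<in> omega_paths - {\<sigma> \<in> omega_paths. \<forall>t. fst (\<sigma> t) \<noteq> []}"
    then obtain t where "fst (\<sigma> t) = []" "\<sigma> \<in> omega_paths" by auto
    then have "path_weight M [q] i \<sigma> (Suc t) = 0" by (simp add: path_weight_def omega_paths_def M_Nil)
    then show "?W [q] \<sigma> = 0" by (rule iprod_zero)
  qed auto
  finally show ?thesis .
qed

definition avoiding_lists :: "'g list \<Rightarrow> nat \<Rightarrow> ('g list \<times> nat) list set" where
  "avoiding_lists w m = {xs \<in> state_lists m. \<forall>x\<in>set xs. fst x \<noteq> w}"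

lemma fpath_weight_leave_pushed_on_zero:
  assumes "i \<in> {1..n}" "xs \<in> avoiding_lists w m" "\<not> (\<forall>x\<in>set xs. pushed_on w (fst x))"
  shows "fpath_weight (q # w, i) (xs @ [(w, k)]) = 0"
proof -
  have len: "length xs = m" and xs_set: "\<forall>x\<in>set xs. snd x \<in> {1..n} \<and> fst x \<noteq> w"
    using assms(2) by (auto simp: avoiding_lists_def state_lists_def)
  obtain t0 where t0: "t0 < m" "\<not> pushed_on w (fst (xs ! t0))"
    using assms(3) len by (auto simp: in_set_conv_nth)
  have "\<forall>t\<le>t0. snd ((xs @ [(w, k)]) ! t) \<in> {1..n} \<and> fst ((xs @ [(w, k)]) ! t) \<noteq> w"
    using xs_set t0(1) len by (auto simp: nth_append)
  then obtain t where "t \<le> t0" "path_weight M ([q] @ w) i ((!) (xs @ [(w, k)])) t = 0"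
    using path_weight_leave_pushed_on_zero[of "[q]" i t0 "(!) (xs @ [(w, k)])" w] assms(1) t0 len
    by (auto simp: nth_append)
  then show ?thesis using t0 len by (intro fpath_weight_zero[of t]) auto
qed

lemma fpath_weight_through_Nil_zero:
  assumes "k \<in> {1..n}" "ys \<in> state_lists m" "\<not> (\<forall>y\<in>set ys. fst y \<noteq> [])"
  shows "fpath_weight (\<pi>, i) (ys @ [([], k)]) = 0"
proof -
  obtain t where t: "t < m" "fst (ys ! t) = []" and len: "length ys = m"
    and rng: "\<forall>y\<in>set ys. snd y \<in> {1..n}"
    using assms(2,3) by (auto simp: state_lists_def in_set_conv_nth)
  have "snd ((ys @ [([], k)]) ! t) \<in> {1..n}" "snd ((ys @ [([], k)]) ! Suc t) \<in> {1..n}"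
    using rng assms(1) t len by (auto simp: nth_append)
  then have "path_weight M \<pi> i ((!) (ys @ [([], k)])) (Suc t) = 0"
    using t len by (simp add: path_weight_def nth_append M_Nil)
  then show ?thesis using t len by (intro fpath_weight_zero[of "Suc t"]) auto
qed

text \<open>Finite paths from q w that stay off w are, up to weight-zero paths, exactly the paths
  from q that stay off the empty stack, lifted by w.\<close>

lemma gsum_avoiding_lists_eq_bmat_pow:
  assumes i: "i \<in> {1..n}" and k: "k \<in> {1..n}"
  shows "gsum ssum (\<lambda>xs. fpath_weight (q # w, i) (xs @ [(w, k)])) (avoiding_lists w m) =
         bmat_pow ssum n M (Suc m) [q] [] i k"
proof -
  let ?F = "\<lambda>\<pi> \<pi>' ys. fpath_weight (\<pi>, i) (ys @ [(\<pi>', k)])"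
  define P where "P = {xs \<in> state_lists m. \<forall>x\<in>set xs. pushed_on w (fst x)}"
  define G where "G = {ys \<in> state_lists m. \<forall>y\<in>set ys. fst y \<noteq> []}"
  have "gsum ssum (?F (q # w) w) (avoiding_lists w m) = gsum ssum (?F (q # w) w) P"
  proof (rule gsum_mono_neutral_right[OF ssum_complete])
    show "P \<subseteq> avoiding_lists w m" by (auto simp: P_def avoiding_lists_def pushed_on_def)
  next
    fix xs assume "xs \<in> avoiding_lists w m - P"
    then show "?F (q # w) w xs = 0"
      by (intro fpath_weight_leave_pushed_on_zero[OF i]) (auto simp: P_def avoiding_lists_def)
  qed
  also have "\<dots> = gsum ssum (\<lambda>ys. ?F (q # w) w (map (lift_state w) ys)) G"
    unfolding P_def G_def
    by (rule gsum_reindex_bij_betw[OF ssum_complete bij_betw_lift_state_lists, symmetric])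
  also have "\<dots> = gsum ssum (?F [q] []) G"
  proof (rule gsum_cong[OF ssum_complete])
    fix ys assume "ys \<in> G"
    then have "fpath_weight (lift_state w ([q], i)) (map (lift_state w) (ys @ [([], k)])) = ?F [q] [] ys"
      using i k by (intro fpath_weight_lift) (auto simp: G_def state_lists_def)
    then show "?F (q # w) w (map (lift_state w) ys) = ?F [q] [] ys" by (simp add: lift_state_def)
  qed
  also have "\<dots> = gsum ssum (?F [q] []) (state_lists m)"
    unfolding G_def
    by (rule gsum_mono_neutral_right[OF ssum_complete, symmetric])
      (auto intro: fpath_weight_through_Nil_zero[OF k])
  also have "\<dots> = bmat_pow ssum n M (Suc m) [q] [] i k"
    by (rule bmat_pow_Suc_eq_gsum_paths[OF i k])
  finally show ?thesis .
qed

definition first_hit_lists :: "'g list \<Rightarrow> nat \<Rightarrow> ('g list \<times> nat) list set" where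
  "first_hit_lists w m = (\<lambda>(k, xs). xs @ [(w, k)]) ` ({1..n} \<times> avoiding_lists w m)"

lemma prefix_in_first_hit_lists_iff:
  assumes "\<sigma> \<in> omega_paths"
  shows "prefix (Suc m) \<sigma> \<in> first_hit_lists w m \<longleftrightarrow> fst (\<sigma> m) = w \<and> (\<forall>t<m. fst (\<sigma> t) \<noteq> w)"
proof -
  have "prefix (Suc m) \<sigma> = prefix m \<sigma> @ [\<sigma> m]" by simp
  moreover have "prefix m \<sigma> \<in> state_lists m" "snd (\<sigma> m) \<in> {1..n}"
    using assms by (auto simp: state_lists_def omega_paths_def)
  ultimately show ?thesis
    by (auto simp: first_hit_lists_def avoiding_lists_def image_iff prod_eq_iff)
qed

lemma m_omega_first_hit:
  assumes i: "i \<in> {1..n}"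
  shows "gsum vsum (\<lambda>\<sigma>. iprod (path_weight M (q # w) i \<sigma>))
           {\<sigma> \<in> omega_paths. prefix (Suc m) \<sigma> \<in> first_hit_lists w m} =
         (\<Sum>k=1..n. act (bmat_pow ssum n M (Suc m) [q] [] i k) (m_omega w k))"
proof -
  have sub: "first_hit_lists w m \<subseteq> state_lists (Suc m)"
    by (auto simp: first_hit_lists_def avoiding_lists_def state_lists_def)
  have bij: "bij_betw (\<lambda>(k, xs). xs @ [(w, k)]) ({1..n} \<times> avoiding_lists w m) (first_hit_lists w m)"
    unfolding first_hit_lists_def by (rule bij_betw_imageI) (auto simp: inj_on_def)
  have "gsum vsum (\<lambda>\<sigma>. iprod (path_weight M (q # w) i \<sigma>))
          {\<sigma> \<in> omega_paths. prefix (Suc m) \<sigma> \<in> first_hit_lists w m} =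
        gsum vsum (\<lambda>xs. act (fpath_weight (q # w, i) xs) (case_prod m_omega (last ((q # w, i) # xs))))
          (first_hit_lists w m)"
    by (rule m_omega_prefix_decomposition[OF sub])
  also have "\<dots> = gsum vsum (\<lambda>(k, xs). act (fpath_weight (q # w, i) (xs @ [(w, k)])) (m_omega w k))
      ({1..n} \<times> avoiding_lists w m)"
    using gsum_reindex_bij_betw[OF vsum_complete bij,
        of "\<lambda>xs. act (fpath_weight (q # w, i) xs) (case_prod m_omega (last ((q # w, i) # xs)))"]
    by (simp add: case_prod_unfold)
  also have "\<dots> = (\<Sum>k=1..n. act (gsum ssum (\<lambda>xs. fpath_weight (q # w, i) (xs @ [(w, k)])) (avoiding_lists w m))
      (m_omega w k))"
    by (simp add: gsum_Sigma[OF vsum_complete] gsum_eq_sum[OF vsum_complete] act_gsum_left)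
  also have "\<dots> = (\<Sum>k=1..n. act (bmat_pow ssum n M (Suc m) [q] [] i k) (m_omega w k))"
    by (rule sum.cong[OF refl]) (simp only: gsum_avoiding_lists_eq_bmat_pow[OF i])
  finally show ?thesis .
qed

text \<open>Split the paths from q w according to the first time they reach the stack w.\<close>

lemma m_omega_Cons:
  assumes i: "i \<in> {1..n}"
  shows "m_omega (q # w) i = m_omega [q] i + (\<Sum>k=1..n. act (bmat_star ssum n M [q] [] i k) (m_omega w k))"
proof -
  let ?W = "\<lambda>\<sigma>. iprod (path_weight M (q # w) i \<sigma>)"
  define A where "A = {\<sigma> \<in> omega_paths. \<forall>t. fst (\<sigma> t) \<noteq> w}"
  define B where "B m = {\<sigma> \<in> omega_paths. prefix (Suc m) \<sigma> \<in> first_hit_lists w m}" for m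
  have B_iff: "\<sigma> \<in> B m \<longleftrightarrow> \<sigma> \<in> omega_paths \<and> fst (\<sigma> m) = w \<and> (\<forall>t<m. fst (\<sigma> t) \<noteq> w)" for \<sigma> m
    using prefix_in_first_hit_lists_iff by (auto simp: B_def)
  have "omega_paths = A \<union> (\<Union>m. B m)"
  proof (intro equalityI subsetI)
    fix \<sigma> assume \<sigma>: "\<sigma> \<in> omega_paths"
    show "\<sigma> \<in> A \<union> (\<Union>m. B m)"
    proof (cases "\<exists>t. fst (\<sigma> t) = w")
      case True
      then obtain m where "fst (\<sigma> m) = w" "\<forall>t<m. fst (\<sigma> t) \<noteq> w"
        using exists_least_iff[of "\<lambda>t. fst (\<sigma> t) = w"] by blast
      then show ?thesis using \<sigma> B_iff by blast
    qed (use \<sigma> in \<open>auto simp: A_def\<close>)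
  qed (auto simp: A_def B_iff)
  moreover have "A \<inter> (\<Union>m. B m) = {}" by (auto simp: A_def B_iff)
  moreover have "B m \<inter> B m' = {}" if "m \<noteq> m'" for m m'
  proof -
    from that have "m < m' \<or> m' < m" by arith
    then show ?thesis by (auto simp: B_iff)
  qed
  ultimately have "m_omega (q # w) i = gsum vsum ?W A + gsum vsum (\<lambda>m. gsum vsum ?W (B m)) UNIV"
    by (simp add: m_omega_eq gsum_union_disjoint[OF vsum_complete] gsum_partition[OF vsum_complete])
  also have "gsum vsum ?W A = m_omega [q] i"
    unfolding A_def by (rule m_omega_never_visiting[OF i])
  also have "gsum vsum (\<lambda>m. gsum vsum ?W (B m)) UNIV =
      gsum vsum (\<lambda>m. \<Sum>k=1..n. act (bmat_pow ssum n M (Suc m) [q] [] i k) (m_omega w k)) UNIV"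
    unfolding B_def by (simp only: m_omega_first_hit[OF i])
  also have "\<dots> = (\<Sum>k=1..n. act (bmat_star ssum n M [q] [] i k) (m_omega w k))"
    by (simp add: gsum_sum_commute[OF vsum_complete] bmat_star_eq_gsum_pow_Suc act_gsum_left
        del: bmat_pow.simps)
  finally show ?thesis .
qed

section \<open>The linear system\<close>

abbreviation star_prod :: "'g list \<Rightarrow> nat \<Rightarrow> nat \<Rightarrow> nat \<Rightarrow> 's" where
  "star_prod \<pi> j \<equiv> mat_list_prod n (map (\<lambda>q. bmat_star ssum n M [q] []) (take j \<pi>))"

lemma m_omega_eq_sum_positions:
  "i \<in> {1..n} \<Longrightarrow> m_omega \<pi> i = (\<Sum>j<length \<pi>. \<Sum>k=1..n. act (star_prod \<pi> j i k) (m_omega [\<pi> ! j] k))"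
proof (induction \<pi> arbitrary: i)
  case Nil
  then show ?case by (simp add: m_omega_Nil)
next
  case (Cons q w)
  let ?S = "bmat_star ssum n M [q] []"
  have "(\<Sum>j<length (q # w). \<Sum>k=1..n. act (star_prod (q # w) j i k) (m_omega [(q # w) ! j] k)) =
      (\<Sum>k=1..n. act (star_prod (q # w) 0 i k) (m_omega [q] k)) +
      (\<Sum>j<length w. \<Sum>k=1..n. act (star_prod (q # w) (Suc j) i k) (m_omega [w ! j] k))"
    unfolding length_Cons sum.lessThan_Suc_shift by simp
  also have "(\<Sum>k=1..n. act (star_prod (q # w) 0 i k) (m_omega [q] k)) = m_omega [q] i"
    using Cons.prems
    by (simp add: mat_list_prod_def mat_one_def if_distrib[of "\<lambda>x. act x _"] cong: if_cong)
  also have "(\<Sum>j<length w. \<Sum>k=1..n. act (star_prod (q # w) (Suc j) i k) (m_omega [w ! j] k)) =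
      (\<Sum>j<length w. \<Sum>k=1..n. \<Sum>k'=1..n. act (?S i k') (act (star_prod w j k' k) (m_omega [w ! j] k)))"
    by (simp add: mat_list_prod_def mat_mult_def act_sum_left act_mult)
  also have "\<dots> = (\<Sum>j<length w. \<Sum>k'=1..n. \<Sum>k=1..n. act (?S i k') (act (star_prod w j k' k) (m_omega [w ! j] k)))"
    by (rule sum.cong[OF refl], rule sum.swap)
  also have "\<dots> = (\<Sum>k'=1..n. act (?S i k') (\<Sum>j<length w. \<Sum>k=1..n. act (star_prod w j k' k) (m_omega [w ! j] k)))"
    by (subst sum.swap) (simp add: act_sum_right)
  also have "\<dots> = (\<Sum>k'=1..n. act (?S i k') (m_omega w k'))"
    by (rule sum.cong[OF refl]) (simp add: Cons.IH)
  also have "m_omega [q] i + \<dots> = m_omega (q # w) i"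
    by (rule m_omega_Cons[OF Cons.prems, symmetric])
  finally show ?case ..
qed

lemma act_m_omega_eq_sum_positions:
  "(\<Sum>k'=1..n. act (A i k') (m_omega \<pi> k')) =
   (\<Sum>j<length \<pi>. \<Sum>k=1..n. act (mat_mult n A (star_prod \<pi> j) i k) (m_omega [\<pi> ! j] k))"
proof -
  have "(\<Sum>k'=1..n. act (A i k') (m_omega \<pi> k')) =
      (\<Sum>k'=1..n. \<Sum>j<length \<pi>. \<Sum>k=1..n. act (A i k') (act (star_prod \<pi> j k' k) (m_omega [\<pi> ! j] k)))"
  proof (rule sum.cong[OF refl])
    fix k' assume "k' \<in> {1..n}"
    then show "act (A i k') (m_omega \<pi> k') =
        (\<Sum>j<length \<pi>. \<Sum>k=1..n. act (A i k') (act (star_prod \<pi> j k' k) (m_omega [\<pi> ! j] k)))"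
      by (simp only: m_omega_eq_sum_positions[of k' \<pi>] act_sum_right)
  qed
  also have "\<dots> = (\<Sum>j<length \<pi>. \<Sum>k'=1..n. \<Sum>k=1..n. act (A i k') (act (star_prod \<pi> j k' k) (m_omega [\<pi> ! j] k)))"
    by (rule sum.swap)
  also have "\<dots> = (\<Sum>j<length \<pi>. \<Sum>k=1..n. \<Sum>k'=1..n. act (A i k') (act (star_prod \<pi> j k' k) (m_omega [\<pi> ! j] k)))"
    by (rule sum.cong[OF refl], rule sum.swap)
  also have "\<dots> = (\<Sum>j<length \<pi>. \<Sum>k=1..n. act (mat_mult n A (star_prod \<pi> j) i k) (m_omega [\<pi> ! j] k))"
    by (simp only: mat_mult_def act_sum_left act_mult)
  finally show ?thesis .
qed

lemma m_omega_singleton: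
  "m_omega [p] i = gsum vsum (\<lambda>\<pi>. \<Sum>k'=1..n. act (M [p] \<pi> i k') (m_omega \<pi> k')) UNIV"
  by (subst m_omega_first_step)
    (simp add: gsum_Sigma[OF vsum_complete] gsum_eq_sum[OF vsum_complete])

lemma m_omega_linear_system:
  assumes "i \<in> {1..n}"
  shows "m_omega [p] i = (\<Sum>p'\<in>UNIV. \<Sum>k=1..n. act (amat ssum n M p p' i k) (m_omega [p'] k))"
proof -
  define E where "E = (\<lambda>(\<pi>, j). \<Sum>k=1..n. act (mat_mult n (M [p] \<pi>) (star_prod \<pi> j) i k) (m_omega [\<pi> ! j] k))"
  define T where "T p' = {(\<pi>, j). j < length \<pi> \<and> \<pi> ! j = p'}" for p' :: 'g
  have "(\<Sum>k=1..n. act (amat ssum n M p p' i k) (m_omega [p'] k)) = gsum vsum E (T p')" for p'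
  proof -
    have "act (amat ssum n M p p' i k) (m_omega [p'] k) =
        gsum vsum (\<lambda>(\<pi>, j). act (mat_mult n (M [p] \<pi>) (star_prod \<pi> j) i k) (m_omega [\<pi> ! j] k)) (T p')" for k
      unfolding amat_def act_gsum_left T_def by (rule gsum_cong[OF vsum_complete]) auto
    then show ?thesis
      by (simp add: E_def gsum_sum_commute[OF vsum_complete] case_prod_unfold)
  qed
  then have "(\<Sum>p'\<in>UNIV. \<Sum>k=1..n. act (amat ssum n M p p' i k) (m_omega [p'] k)) =
      gsum vsum (\<lambda>p'. gsum vsum E (T p')) UNIV"
    by (simp add: gsum_eq_sum[OF vsum_complete])
  also have "\<dots> = gsum vsum E (SIGMA \<pi>:UNIV. {..<length \<pi>})"
    by (rule gsum_partition[OF vsum_complete]) (auto simp: T_def)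
  also have "\<dots> = gsum vsum (\<lambda>\<pi>. \<Sum>j<length \<pi>. E (\<pi>, j)) UNIV"
    by (simp add: gsum_Sigma[OF vsum_complete] gsum_eq_sum[OF vsum_complete])
  also have "\<dots> = gsum vsum (\<lambda>\<pi>. \<Sum>k'=1..n. act (M [p] \<pi> i k') (m_omega \<pi> k')) UNIV"
  proof (rule gsum_cong[OF vsum_complete])
    fix \<pi> :: "'g list"
    show "(\<Sum>j<length \<pi>. E (\<pi>, j)) = (\<Sum>k'=1..n. act (M [p] \<pi> i k') (m_omega \<pi> k'))"
      using act_m_omega_eq_sum_positions[of "M [p] \<pi>" i \<pi>] by (simp add: E_def)
  qed
  also have "\<dots> = m_omega [p] i"
    by (rule m_omega_singleton[symmetric])
  finally show ?thesis ..
qed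

end

theorem theorem8:
  fixes ssum :: "(U \<Rightarrow> 's::{semiring_0,monoid_mult}) \<Rightarrow> U set \<Rightarrow> 's"
    and act :: "'s \<Rightarrow> 'v::comm_monoid_add \<Rightarrow> 'v"
    and vsum :: "(U \<Rightarrow> 'v) \<Rightarrow> U set \<Rightarrow> 'v"
    and iprod :: "(nat \<Rightarrow> 's) \<Rightarrow> 'v"
    and S' :: "'s set"
    and n l :: nat
    and M :: "'g::finite list \<Rightarrow> 'g list \<Rightarrow> nat \<Rightarrow> nat \<Rightarrow> 's"
  assumes "complete_ss_pair ssum act vsum iprod"
    and "0 \<in> S'" and "1 \<in> S'"
    and "n \<ge> 1"
    and "\<forall>p1 p2. \<forall>i\<in>{1..n}. \<forall>j\<in>{1..n}. M p1 p2 i j \<in> S'"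
    and "pushdown_matrix n M"
    and "l \<le> n"
  shows "\<forall>p. \<forall>i\<in>{1..n}. momega vsum iprod n M l [p] i =
           (\<Sum>p'\<in>UNIV. \<Sum>k=1..n. act (amat ssum n M p p' i k) (momega vsum iprod n M l [p'] k))"
proof -
  interpret pushdown_system ssum act vsum iprod n l M
    using assms(1,6) by unfold_locales
  show ?thesis using m_omega_linear_system by blast
qed

end
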